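(* Let $\mathbb F$ be a finitely generated free group with symmetric free generating set $S$, let $\mathcal G=(V,E)$ be a constraint graph with $V$ and $E$ finite, and let $X=X_{\mathcal G}\subset V^{\mathbb F}$ be the graph subshift determined by $\mathcal G$. If there exists a shift-invariant Borel probability measure $\mu$ on $X$, then there exists a periodic treequence $x\in X$. Moreover, if for some $v\in V$ one has $\mu(\{x\in X: x(\mathrm{id})=v\})>0$, then there exists a periodic treequence $x\in X$ with $x(\mathrm{id})=v$.
   Context: $S=B\cup B^{-1}$ for a free basis $B$ of $\mathbb F$; $\mathrm{id}$ is the identity of $\mathbb F$. A constraint graph is a pair $\mathcal G=(V,E)$ with $E\subset V\times V\times S$; a triple $(v,w;s)\in E$ is a directed edge from $v$ to $w$ labeled $s$. Elements of $V^{\mathbb F}$ (functions $\mathbb F\to V$) are called treequences; $V^{\mathbb F}$ carries the product topology ($V$ discrete). The graph subshift $X_{\mathcal G}$ is the set of $x\in V^{\mathbb F}$ such that $(x(f),x(fs);s)\in E$ for all $f\in\mathbb F$, $s\in S$. $\mathbb F$ acts by shifts $(\sigma_gx)(f)=x(g^{-1}f)$; a measure $\mu$ is shift-invariant if $\mu(\sigma_gA)=\mu(A)$ for all $g$ and Borel $A$. A treequence $x$ is periodic if $\{f\in\mathbb F:\sigma_fx=x\}$ has finite index in $\mathbb F$. *)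

theory Defs
  imports "HOL-Probability.Probability"
begin

text \<open>A letter (b, True) stands for the basis element b, (b, False) for its inverse.
  The symmetric generating set S = B \<union> B^-1 is thus the type 'b \<times> bool.\<close>

definition letter_inv :: "'b \<times> bool \<Rightarrow> 'b \<times> bool" where
  "letter_inv l = (fst l, \<not> snd l)"

fun reduced :: "('b \<times> bool) list \<Rightarrow> bool" where
  "reduced [] = True"
| "reduced [_] = True"
| "reduced (a # b # w) = (b \<noteq> letter_inv a \<and> reduced (b # w))"

typedef 'b fgrp = "{w :: ('b \<times> bool) list. reduced w}"
  by (rule exI[of _ "[]"]) simp

fun cons_red :: "'b \<times> bool \<Rightarrow> ('b \<times> bool) list \<Rightarrow> ('b \<times> bool) list" where
  "cons_red a [] = [a]"
| "cons_red a (b # w) = (if b = letter_inv a then w else a # b # w)"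

definition fmul :: "'b fgrp \<Rightarrow> 'b fgrp \<Rightarrow> 'b fgrp" where
  "fmul u v = Abs_fgrp (foldr cons_red (Rep_fgrp u) (Rep_fgrp v))"

definition fone :: "'b fgrp" where
  "fone = Abs_fgrp []"

definition finv :: "'b fgrp \<Rightarrow> 'b fgrp" where
  "finv u = Abs_fgrp (rev (map letter_inv (Rep_fgrp u)))"

definition gen :: "'b \<times> bool \<Rightarrow> 'b fgrp" where
  "gen s = Abs_fgrp [s]"

text \<open>A constraint graph with vertex type 'v (finite) has edge set
  E \<subseteq> V \<times> V \<times> S; an edge (v, w, s) goes from v to w with label s.\<close>

definition graph_subshift :: "('v \<times> 'v \<times> ('b \<times> bool)) set \<Rightarrow> ('b fgrp \<Rightarrow> 'v) set" where
  "graph_subshift E = {x. \<forall>f s. (x f, x (fmul f (gen s)), s) \<in> E}"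

definition shift :: "'b fgrp \<Rightarrow> ('b fgrp \<Rightarrow> 'v) \<Rightarrow> ('b fgrp \<Rightarrow> 'v)" where
  "shift g x = (\<lambda>f. x (fmul (finv g) f))"

definition finite_index :: "'b fgrp set \<Rightarrow> bool" where
  "finite_index H = finite ((\<lambda>a. (\<lambda>h. fmul a h) ` H) ` UNIV)"

definition periodic :: "('b fgrp \<Rightarrow> 'v) \<Rightarrow> bool" where
  "periodic x = finite_index {f. shift f x = x}"

text \<open>The Borel sigma-algebra of the full shift V^F (V finite discrete, F countable)
  coincides with the product sigma-algebra.\<close>
definition full_shift_measure :: "('b fgrp \<Rightarrow> 'v) measure" where
  "full_shift_measure = Pi\<^sub>M UNIV (\<lambda>_. count_space UNIV)"

end

(*
  A shift-invariant probability measure on X gives the vertex weights p v = mu[x(1) = v] and, for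
  each basis element b, the edge weights q_b v w = mu[x(1) = v, x(b) = w].  Shift invariance makes
  both the row sums and the column sums of q_b equal to p, and q_b v w > 0 only if (v, w; b) is an
  edge.  These balance equations have rational coefficients, so they have rational, hence (after
  clearing denominators) natural-number solutions n, m_b with the same support as p, q_b.  A
  natural-number matrix m_b with row and column sums n counts the transitions of a permutation of
  the set with n v copies of each vertex v.  Letting each b act by its permutation turns this
  finite set into a Schreier graph of the free group covering the constraint graph, and reading off
  the vertices along the orbit of a copy of v gives a treequence in X with finitely many shifts,
  i.e. a periodic one, with x(1) = v.
*)

theory Submission
  imports Defs
begin

section \<open>The free group on reduced words\<close>

lemma letter_inv_letter_inv [simp]: "letter_inv (letter_inv a) = a"
  by (simp add: letter_inv_def)

lemma reduced_ConsD: "reduced (a # w) \<Longrightarrow> reduced w"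
  by (cases w) auto

lemma reduced_cons_red: "reduced w \<Longrightarrow> reduced (cons_red a w)"
  by (cases w) (auto dest: reduced_ConsD)

lemma reduced_foldr_cons_red: "reduced w \<Longrightarrow> reduced (foldr cons_red u w)"
  by (induction u) (auto intro: reduced_cons_red)

lemma reduced_Rep_fgrp [simp]: "reduced (Rep_fgrp u)"
  using Rep_fgrp by simp

lemma Rep_fmul: "Rep_fgrp (fmul u v) = foldr cons_red (Rep_fgrp u) (Rep_fgrp v)"
  unfolding fmul_def by (simp add: Abs_fgrp_inverse reduced_foldr_cons_red)

lemma Rep_fone [simp]: "Rep_fgrp fone = []"
  unfolding fone_def by (simp add: Abs_fgrp_inverse)

lemma Rep_gen [simp]: "Rep_fgrp (gen s) = [s]"
  unfolding gen_def by (simp add: Abs_fgrp_inverse)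

lemma cons_red_cancel: "reduced w \<Longrightarrow> cons_red a (cons_red (letter_inv a) w) = w"
  by (cases w rule: reduced.cases) (auto simp: letter_inv_def)

lemma foldr_cons_red_cons_red:
  "reduced w \<Longrightarrow> foldr cons_red (cons_red a v) w = cons_red a (foldr cons_red v w)"
  by (cases v) (auto simp: cons_red_cancel reduced_foldr_cons_red)

lemma foldr_cons_red_assoc:
  "reduced w \<Longrightarrow> foldr cons_red (foldr cons_red u v) w = foldr cons_red u (foldr cons_red v w)"
  by (induction u) (auto simp: foldr_cons_red_cons_red)

lemma fmul_assoc: "fmul (fmul u v) w = fmul u (fmul v w)"
  by (simp add: Rep_fgrp_inject[symmetric] Rep_fmul foldr_cons_red_assoc)

lemma fmul_fone_left [simp]: "fmul fone u = u"
  by (simp add: Rep_fgrp_inject[symmetric] Rep_fmul)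

lemma foldr_cons_red_Nil: "reduced w \<Longrightarrow> foldr cons_red w [] = w"
  by (induction w rule: reduced.induct) auto

lemma fmul_fone_right [simp]: "fmul u fone = u"
  by (simp add: Rep_fgrp_inject[symmetric] Rep_fmul foldr_cons_red_Nil)

lemma reduced_snoc:
  "reduced (w @ [a]) \<longleftrightarrow> reduced w \<and> (w \<noteq> [] \<longrightarrow> a \<noteq> letter_inv (last w))"
  by (induction w rule: reduced.induct) auto

lemma letter_inv_eq_iff [simp]: "letter_inv a = letter_inv b \<longleftrightarrow> a = b"
  by (metis letter_inv_letter_inv)

lemma reduced_rev_map_letter_inv: "reduced w \<Longrightarrow> reduced (rev (map letter_inv w))"
proof (induction w)
  case (Cons a w)
  then have "reduced w" and "w \<noteq> [] \<Longrightarrow> hd w \<noteq> letter_inv a"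
    by (cases w; auto)+
  with Cons.IH show ?case
    by (auto simp: reduced_snoc last_rev hd_map)
qed simp

lemma Rep_finv: "Rep_fgrp (finv u) = rev (map letter_inv (Rep_fgrp u))"
  unfolding finv_def by (simp add: Abs_fgrp_inverse reduced_rev_map_letter_inv)

lemma foldr_cons_red_inverse:
  "reduced w \<Longrightarrow> foldr cons_red u (foldr cons_red (rev (map letter_inv u)) w) = w"
  by (induction u arbitrary: w) (auto simp: reduced_cons_red cons_red_cancel)

lemma fmul_finv_cancel_left [simp]: "fmul u (fmul (finv u) v) = v"
  by (simp add: Rep_fgrp_inject[symmetric] Rep_fmul Rep_finv foldr_cons_red_inverse)

lemma fmul_finv_right [simp]: "fmul u (finv u) = fone"
  using fmul_finv_cancel_left[of u fone] by simp

lemma finv_finv [simp]: "finv (finv u) = u"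
  by (simp add: Rep_fgrp_inject[symmetric] Rep_finv rev_map comp_def)

lemma fmul_finv_left [simp]: "fmul (finv u) u = fone"
  using fmul_finv_right[of "finv u"] by simp

lemma finv_fmul_cancel_left [simp]: "fmul (finv u) (fmul u v) = v"
  by (simp flip: fmul_assoc)

lemma finv_fone [simp]: "finv fone = fone"
  by (metis fmul_fone_left fmul_finv_right)

lemma finv_fmul: "finv (fmul u v) = fmul (finv v) (finv u)"
  by (metis finv_fmul_cancel_left fmul_assoc fmul_fone_right fmul_finv_right)

lemma fmul_gen_letter_inv [simp]: "fmul (gen s) (gen (letter_inv s)) = fone"
  by (simp add: Rep_fgrp_inject[symmetric] Rep_fmul)

section \<open>Shifts and periodic points\<close>

lemma shift_fone [simp]: "shift fone x = x"
  by (simp add: shift_def)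

lemma shift_fmul: "shift (fmul g h) x = shift g (shift h x)"
  by (simp add: shift_def finv_fmul fmul_assoc)

lemma shift_finv_shift [simp]: "shift (finv g) (shift g x) = x"
  by (simp flip: shift_fmul)

lemma shift_shift_finv [simp]: "shift g (shift (finv g) x) = x"
  using shift_finv_shift[of "finv g" x] by simp

lemma shift_in_graph_subshift: "x \<in> graph_subshift E \<Longrightarrow> shift g x \<in> graph_subshift E"
  by (simp add: graph_subshift_def shift_def flip: fmul_assoc)

lemma graph_subshift_edge_letter_inv:
  assumes "x \<in> graph_subshift E"
  shows "(x (fmul f (gen s)), x f, letter_inv s) \<in> E"
proof -
  have "(x (fmul f (gen s)), x (fmul (fmul f (gen s)) (gen (letter_inv s))), letter_inv s) \<in> E"
    using assms unfolding graph_subshift_def by blast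
  then show ?thesis
    by (simp add: fmul_assoc)
qed

lemma graph_subshift_edges_at_fone:
  assumes "x \<in> graph_subshift E"
  shows "(x fone, x (gen s), s) \<in> E" "(x (gen s), x fone, letter_inv s) \<in> E"
proof -
  have "(x fone, x (fmul fone (gen s)), s) \<in> E"
    using assms unfolding graph_subshift_def by blast
  then show "(x fone, x (gen s), s) \<in> E"
    by simp
  show "(x (gen s), x fone, letter_inv s) \<in> E"
    using graph_subshift_edge_letter_inv[OF assms, of fone s] by simp
qed

lemma shift_image_cylinder:
  "shift g ` {x \<in> graph_subshift E. x f = v} = {x \<in> graph_subshift E. x (fmul g f) = v}"
proof (intro equalityI subsetI)
  fix x assume "x \<in> shift g ` {x \<in> graph_subshift E. x f = v}"
  then show "x \<in> {x \<in> graph_subshift E. x (fmul g f) = v}"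
    by (auto simp: shift_in_graph_subshift) (simp add: shift_def)
next
  fix x assume "x \<in> {x \<in> graph_subshift E. x (fmul g f) = v}"
  then have "shift (finv g) x \<in> {x \<in> graph_subshift E. x f = v}"
    by (simp add: shift_in_graph_subshift) (simp add: shift_def)
  then show "x \<in> shift g ` {x \<in> graph_subshift E. x f = v}"
    using image_eqI[of x "shift g" "shift (finv g) x"] by simp
qed

lemma periodic_if_finite_orbit:
  assumes "finite (range (\<lambda>g. shift g x))"
  shows "periodic x"
proof -
  let ?H = "{h. shift h x = x}"
  have "(\<lambda>h. fmul g h) ` ?H = {k. shift k x = shift g x}" for g
  proof (intro equalityI subsetI)
    fix k assume "k \<in> {k. shift k x = shift g x}"
    then have "shift (fmul (finv g) k) x = x"
      by (simp add: shift_fmul)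
    then show "k \<in> (\<lambda>h. fmul g h) ` ?H"
      by (intro image_eqI[of _ _ "fmul (finv g) k"]) auto
  qed (auto simp: shift_fmul)
  then have "(\<lambda>g. (\<lambda>h. fmul g h) ` ?H) ` UNIV = (\<lambda>y. {k. shift k x = y}) ` range (\<lambda>g. shift g x)"
    by auto
  with assms show ?thesis
    unfolding periodic_def finite_index_def by simp
qed

text \<open>The labels along the orbit of \<open>\<omega>\<^sub>0\<close> under the induced action of the free group form
  the treequence; its shifts are the labellings of the orbits of the other points of \<open>\<Omega>\<close>.\<close>

lemma periodic_point_from_finite_action:
  fixes P :: "'b \<times> bool \<Rightarrow> 'a \<Rightarrow> 'a" and label :: "'a \<Rightarrow> 'v"
  assumes "finite \<Omega>" "\<omega>\<^sub>0 \<in> \<Omega>"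
    and closed: "\<And>s \<omega>. \<omega> \<in> \<Omega> \<Longrightarrow> P s \<omega> \<in> \<Omega>"
    and inverse: "\<And>s \<omega>. \<omega> \<in> \<Omega> \<Longrightarrow> P (letter_inv s) (P s \<omega>) = \<omega>"
    and edges: "\<And>s \<omega>. \<omega> \<in> \<Omega> \<Longrightarrow> (label \<omega>, label (P s \<omega>), s) \<in> E"
  shows "\<exists>x \<in> graph_subshift E. periodic x \<and> x fone = label \<omega>\<^sub>0"
proof -
  define act where "act \<omega> w = foldl (\<lambda>\<omega> s. P s \<omega>) \<omega> w" for \<omega> w
  have act_in: "act \<omega> w \<in> \<Omega>" if "\<omega> \<in> \<Omega>" for \<omega> w
    using that by (induction w arbitrary: \<omega>) (auto simp: act_def closed)
  have act_cons_red: "act \<omega> (cons_red s w) = act (P s \<omega>) w" if "\<omega> \<in> \<Omega>" for \<omega> s w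
    using that by (cases w) (auto simp: act_def inverse)
  have act_foldr: "act \<omega> (foldr cons_red u w) = act \<omega> (u @ w)" if "\<omega> \<in> \<Omega>" for \<omega> u w
    using that by (induction u arbitrary: \<omega>) (simp_all add: act_cons_red closed, simp add: act_def)
  define x where "x \<omega> g = label (act \<omega> (Rep_fgrp g))" for \<omega> g
  have x_fmul: "x \<omega> (fmul g h) = x (act \<omega> (Rep_fgrp g)) h" if "\<omega> \<in> \<Omega>" for \<omega> g h
    using that by (simp add: x_def Rep_fmul act_foldr) (simp add: act_def)
  have "x \<omega>\<^sub>0 (fmul g (gen s)) = label (P s (act \<omega>\<^sub>0 (Rep_fgrp g)))" for g s
    using assms(2) by (simp add: x_fmul) (simp add: x_def act_def)
  then have "x \<omega>\<^sub>0 \<in> graph_subshift E"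
    unfolding graph_subshift_def using assms(2) by (simp add: x_def edges act_in)
  moreover have "shift g (x \<omega>\<^sub>0) = x (act \<omega>\<^sub>0 (Rep_fgrp (finv g)))" for g
    using assms(2) by (simp add: shift_def x_fmul fun_eq_iff)
  then have "range (\<lambda>g. shift g (x \<omega>\<^sub>0)) \<subseteq> x ` \<Omega>"
    using assms(2) by (auto simp: act_in)
  then have "periodic (x \<omega>\<^sub>0)"
    using finite_subset finite_imageI[OF \<open>finite \<Omega>\<close>] by (intro periodic_if_finite_orbit) blast
  moreover have "x \<omega>\<^sub>0 fone = label \<omega>\<^sub>0"
    by (simp add: x_def act_def)
  ultimately show ?thesis
    by blast
qed

section \<open>Periodic points from balanced weights\<close>

definition balanced ::
    "('v::finite \<Rightarrow> 'a::comm_monoid_add) \<Rightarrow> ('b \<Rightarrow> 'v \<Rightarrow> 'v \<Rightarrow> 'a) \<Rightarrow> bool" where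
  "balanced n m \<longleftrightarrow> (\<forall>b v. (\<Sum>w\<in>UNIV. m b v w) = n v) \<and> (\<forall>b w. (\<Sum>v\<in>UNIV. m b v w) = n w)"

definition copies :: "('v \<Rightarrow> nat) \<Rightarrow> ('v \<times> nat) set" where
  "copies n = (SIGMA v:UNIV. {..<n v})"

lemma finite_copies [simp]: "finite (copies (n :: 'v::finite \<Rightarrow> nat))"
  by (simp add: copies_def)

lemma card_copies_fiber: "card {\<omega> \<in> copies n. fst \<omega> = v} = n v"
proof -
  have "{\<omega> \<in> copies n. fst \<omega> = v} = Pair v ` {..<n v}"
    by (auto simp: copies_def)
  then show ?thesis
    by (simp add: card_image inj_on_def)
qed

lemma bij_betw_fiberwise:
  assumes "finite A" "finite B" "\<And>l. card {a \<in> A. f a = l} = card {b \<in> B. g b = l}"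
  shows "\<exists>h. bij_betw h A B \<and> (\<forall>a \<in> A. g (h a) = f a)"
proof -
  have "\<forall>l. \<exists>h. bij_betw h {a \<in> A. f a = l} {b \<in> B. g b = l}"
    using assms by (auto intro: finite_same_card_bij)
  then obtain H where H: "\<forall>l. bij_betw (H l) {a \<in> A. f a = l} {b \<in> B. g b = l}"
    by (rule choice[THEN exE])
  define h where "h a = H (f a) a" for a
  have "bij_betw h {a \<in> A. f a = l} {b \<in> B. g b = l}" for l
    using H[rule_format, of l] by (rule bij_betw_cong[THEN iffD1, rotated]) (simp add: h_def)
  then have "bij_betw h (\<Union>l. {a \<in> A. f a = l}) (\<Union>l. {b \<in> B. g b = l})"
    by (intro bij_betw_UNION_disjoint) (auto simp: disjoint_family_on_def)
  moreover have "(\<Union>l. {a \<in> A. f a = l}) = A" "(\<Union>l. {b \<in> B. g b = l}) = B"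
    by auto
  moreover have "g (h a) = f a" if "a \<in> A" for a
    using H[rule_format, of "f a"] that by (auto simp: h_def dest: bij_betw_apply)
  ultimately show ?thesis
    by auto
qed

text \<open>A nonnegative integer matrix whose row and column sums are both \<open>n\<close> is the transition
  count of a permutation of the \<open>n v\<close> copies of each vertex \<open>v\<close>: match the copies of \<open>v\<close>
  with the units of mass leaving \<open>v\<close>, and those with the copies of their targets.\<close>

lemma balanced_matrix_permutation:
  fixes n :: "'v::finite \<Rightarrow> nat" and m :: "'v \<Rightarrow> 'v \<Rightarrow> nat"
  assumes rows: "\<And>v. (\<Sum>w\<in>UNIV. m v w) = n v" and cols: "\<And>w. (\<Sum>v\<in>UNIV. m v w) = n w"
  shows "\<exists>\<sigma>. bij_betw \<sigma> (copies n) (copies n) \<and> (\<forall>\<omega> \<in> copies n. m (fst \<omega>) (fst (\<sigma> \<omega>)) > 0)"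
proof -
  define T where "T = (SIGMA v:UNIV. SIGMA w:UNIV. {..<m v w})"
  have card_source: "card {t \<in> T. fst t = v} = n v" for v
  proof -
    have "{t \<in> T. fst t = v} = Pair v ` (SIGMA w:UNIV. {..<m v w})"
      by (auto simp: T_def)
    also have "card \<dots> = card (SIGMA w:UNIV. {..<m v w})"
      by (rule card_image) (simp add: inj_on_def)
    finally show ?thesis
      by (simp add: card_SigmaI rows)
  qed
  have card_target: "card {t \<in> T. fst (snd t) = w} = n w" for w
  proof -
    have "{t \<in> T. fst (snd t) = w} = (\<lambda>(v, j). (v, w, j)) ` (SIGMA v:UNIV. {..<m v w})"
      by (force simp: T_def)
    also have "card \<dots> = card (SIGMA v:UNIV. {..<m v w})"
      by (rule card_image) (auto simp: inj_on_def)
    finally show ?thesis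
      by (simp add: card_SigmaI cols)
  qed
  have "finite T"
    by (simp add: T_def)
  obtain \<alpha> where \<alpha>: "bij_betw \<alpha> T (copies n)" "\<And>t. t \<in> T \<Longrightarrow> fst (\<alpha> t) = fst t"
    using bij_betw_fiberwise[OF \<open>finite T\<close> finite_copies, of fst n fst]
    by (metis card_source card_copies_fiber)
  obtain \<beta> where \<beta>: "bij_betw \<beta> T (copies n)" "\<And>t. t \<in> T \<Longrightarrow> fst (\<beta> t) = fst (snd t)"
    using bij_betw_fiberwise[OF \<open>finite T\<close> finite_copies, of "\<lambda>t. fst (snd t)" n fst]
    by (metis card_target card_copies_fiber)
  have "m (fst \<omega>) (fst (\<beta> (inv_into T \<alpha> \<omega>))) > 0" if "\<omega> \<in> copies n" for \<omega>
  proof -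
    have t: "inv_into T \<alpha> \<omega> \<in> T" "\<alpha> (inv_into T \<alpha> \<omega>) = \<omega>"
      using that \<alpha>(1) by (auto simp: bij_betw_def inv_into_into f_inv_into_f)
    then show ?thesis
      using \<alpha>(2) \<beta>(2) by (force simp: T_def)
  qed
  moreover have "bij_betw (\<beta> \<circ> inv_into T \<alpha>) (copies n) (copies n)"
    using \<alpha>(1) \<beta>(1) by (rule bij_betw_trans[OF bij_betw_inv_into])
  ultimately show ?thesis
    by auto
qed

lemma periodic_point_from_balanced_weights:
  fixes n :: "'v::finite \<Rightarrow> nat" and m :: "'b \<Rightarrow> 'v \<Rightarrow> 'v \<Rightarrow> nat"
  assumes "balanced n m" "n v\<^sub>0 > 0"
    and edges: "\<And>b v w. m b v w > 0 \<Longrightarrow> (v, w, (b, True)) \<in> E \<and> (w, v, (b, False)) \<in> E"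
  shows "\<exists>x \<in> graph_subshift E. periodic x \<and> x fone = v\<^sub>0"
proof -
  have "\<forall>b. \<exists>\<sigma>. bij_betw \<sigma> (copies n) (copies n) \<and> (\<forall>\<omega> \<in> copies n. m b (fst \<omega>) (fst (\<sigma> \<omega>)) > 0)"
    using \<open>balanced n m\<close> unfolding balanced_def by (blast intro: balanced_matrix_permutation)
  then obtain \<sigma> where "\<forall>b. bij_betw (\<sigma> b) (copies n) (copies n)
      \<and> (\<forall>\<omega> \<in> copies n. m b (fst \<omega>) (fst (\<sigma> b \<omega>)) > 0)"
    by (rule choice[THEN exE])
  then have \<sigma>: "\<And>b. bij_betw (\<sigma> b) (copies n) (copies n)"
    "\<And>b \<omega>. \<omega> \<in> copies n \<Longrightarrow> m b (fst \<omega>) (fst (\<sigma> b \<omega>)) > 0"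
    by blast+
  define P where "P s = (if snd s then \<sigma> (fst s) else inv_into (copies n) (\<sigma> (fst s)))" for s
  have inv_in: "inv_into (copies n) (\<sigma> b) \<omega> \<in> copies n"
    and inv_right: "\<sigma> b (inv_into (copies n) (\<sigma> b) \<omega>) = \<omega>" if "\<omega> \<in> copies n" for b \<omega>
    using \<sigma>(1)[of b] that by (auto simp: bij_betw_def inv_into_into f_inv_into_f)
  have inv_left: "inv_into (copies n) (\<sigma> b) (\<sigma> b \<omega>) = \<omega>" if "\<omega> \<in> copies n" for b \<omega>
    using \<sigma>(1)[of b] that by (simp add: bij_betw_def)
  have "(fst \<omega>, fst (P s \<omega>), s) \<in> E" if "\<omega> \<in> copies n" for s \<omega>
  proof (cases s)
    case (Pair b t)
    have "m b (fst (inv_into (copies n) (\<sigma> b) \<omega>)) (fst \<omega>) > 0"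
      using \<sigma>(2)[OF inv_in[OF that, of b], of b] by (simp add: inv_right[OF that])
    then show ?thesis
      using Pair edges \<sigma>(2)[OF that] by (cases t) (auto simp: P_def)
  qed
  moreover have "(v\<^sub>0, 0) \<in> copies n"
    using \<open>n v\<^sub>0 > 0\<close> by (simp add: copies_def)
  ultimately show ?thesis
    using periodic_point_from_finite_action[of "copies n" "(v\<^sub>0, 0)" P fst E]
    by (auto simp: P_def letter_inv_def inv_in inv_left inv_right bij_betw_apply[OF \<sigma>(1)])
qed

section \<open>Nonnegative integer solutions of rational linear systems\<close>

lemma Rats_approx_uniform:
  assumes "\<epsilon> > 0"
  shows "\<exists>y. \<forall>i. y i \<in> \<rat> \<and> \<bar>x i - y i\<bar> < (\<epsilon> :: real)"
proof -
  have "\<exists>r \<in> \<rat>. x i < r \<and> r < x i + \<epsilon>" for i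
    using Rats_dense_in_real[of "x i" "x i + \<epsilon>"] assms by auto
  then obtain y where y: "\<And>i. y i \<in> \<rat>" "\<And>i. x i < y i" "\<And>i. y i < x i + \<epsilon>"
    by metis
  have "\<bar>x i - y i\<bar> < \<epsilon>" for i
    using y(2,3)[of i] assms by (simp add: abs_less_iff)
  with y(1) show ?thesis
    by blast
qed

lemma sum_eliminate_coordinate:
  fixes d a z :: "'i \<Rightarrow> 'a::comm_ring_1"
  assumes "finite I" "k \<in> I" "a k = 1"
  shows "(\<Sum>i\<in>I. d i * z i) = (\<Sum>i\<in>I - {k}. (d i - d k * a i) * z i) + d k * (\<Sum>i\<in>I. a i * z i)"
proof -
  have "(\<Sum>i\<in>I - {k}. (d i - d k * a i) * z i)
      = (\<Sum>i\<in>I - {k}. d i * z i) - d k * (\<Sum>i\<in>I - {k}. a i * z i)"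
    by (simp add: left_diff_distrib sum_subtractf sum_distrib_left mult.assoc)
  then show ?thesis
    using \<open>a k = 1\<close> by (simp add: sum.remove[OF assms(1,2)] algebra_simps)
qed

lemma abs_sum_mult_le:
  fixes a u :: "'i \<Rightarrow> real"
  assumes "\<And>i. i \<in> I \<Longrightarrow> \<bar>u i\<bar> \<le> \<delta>"
  shows "\<bar>\<Sum>i\<in>I. a i * u i\<bar> \<le> (\<Sum>i\<in>I. \<bar>a i\<bar>) * \<delta>"
proof -
  have "\<bar>\<Sum>i\<in>I. a i * u i\<bar> \<le> (\<Sum>i\<in>I. \<bar>a i\<bar> * \<bar>u i\<bar>)"
    by (rule order_trans[OF sum_abs]) (simp add: abs_mult)
  also have "\<dots> \<le> (\<Sum>i\<in>I. \<bar>a i\<bar> * \<delta>)"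
    using assms by (intro sum_mono mult_left_mono) auto
  finally show ?thesis
    by (simp add: sum_distrib_right)
qed

text \<open>Solving the equation \<open>\<Sum>i\<in>I. a i * y i = 0\<close> for \<open>y k\<close> turns a rational solution of the
  system with \<open>y k\<close> eliminated into one of the full system; approximating the other unknowns to
  within \<open>\<epsilon> / (1 + \<Sum>i\<in>I - {k}. \<bar>a i\<bar>)\<close> keeps \<open>y k\<close> within \<open>\<epsilon>\<close> as well.\<close>

lemma rational_solution_extend:
  fixes x :: "'i \<Rightarrow> real"
  assumes "finite I" "k \<in> I" "a k = 1" "\<forall>i \<in> I. a i \<in> \<rat>" "(\<Sum>i\<in>I. a i * x i) = 0" "\<epsilon> > 0"
    and reduced: "\<And>\<delta>. \<delta> > 0 \<Longrightarrow> \<exists>y. (\<forall>i \<in> I - {k}. y i \<in> \<rat>)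
      \<and> (\<forall>d \<in> Eq. (\<Sum>i\<in>I - {k}. (d i - d k * a i) * y i) = 0) \<and> (\<forall>i \<in> I - {k}. \<bar>x i - y i\<bar> < \<delta>)"
  shows "\<exists>y. (\<forall>i \<in> I. y i \<in> \<rat>) \<and> (\<forall>d \<in> Eq \<union> {a}. (\<Sum>i\<in>I. d i * y i) = 0)
    \<and> (\<forall>i \<in> I. \<bar>x i - y i\<bar> < \<epsilon>)"
proof -
  define I' where "I' = I - {k}"
  define A where "A = (\<Sum>i\<in>I'. \<bar>a i\<bar>)"
  define \<delta> where "\<delta> = \<epsilon> / (1 + A)"
  have "A \<ge> 0"
    by (simp add: A_def sum_nonneg)
  then have "\<delta> > 0" "\<delta> \<le> \<epsilon>" "A * \<delta> < \<epsilon>"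
    using \<open>\<epsilon> > 0\<close> by (simp_all add: \<delta>_def field_simps)
  then obtain y' where y': "\<forall>i \<in> I'. y' i \<in> \<rat>" "\<forall>d \<in> Eq. (\<Sum>i\<in>I'. (d i - d k * a i) * y' i) = 0"
    "\<forall>i \<in> I'. \<bar>x i - y' i\<bar> < \<delta>"
    using reduced unfolding I'_def by blast
  define y where "y = y'(k := - (\<Sum>i\<in>I'. a i * y' i))"
  have split_k: "(\<Sum>i\<in>I. a i * z i) = z k + (\<Sum>i\<in>I'. a i * z i)" for z
    using \<open>a k = 1\<close> by (simp add: sum.remove[OF assms(1,2)] I'_def)
  have y_I': "(\<Sum>i\<in>I'. d i * y i) = (\<Sum>i\<in>I'. d i * y' i)" for d
    by (rule sum.cong) (auto simp: y_def I'_def)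
  have a_y: "(\<Sum>i\<in>I. a i * y i) = 0"
    using split_k[of y] y_I'[of a] by (simp add: y_def)
  have "y i \<in> \<rat>" if "i \<in> I" for i
    using y'(1) assms(4) that by (auto simp: y_def I'_def intro!: Rats_sum Rats_mult)
  moreover have "(\<Sum>i\<in>I. d i * y i) = 0" if "d \<in> Eq" for d
    using sum_eliminate_coordinate[where I = I and k = k and a = a, OF assms(1-3), of d y]
      y_I'[of "\<lambda>i. d i - d k * a i"] y'(2) that a_y
    by (simp add: I'_def)
  moreover have "\<bar>x i - y i\<bar> < \<epsilon>" if "i \<in> I" for i
  proof (cases "i = k")
    case True
    have "x k - y k = - (\<Sum>i\<in>I'. a i * (x i - y' i))"
      using split_k[of x] assms(5) by (simp add: y_def algebra_simps sum_subtractf)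
    moreover have "\<bar>\<Sum>i\<in>I'. a i * (x i - y' i)\<bar> \<le> A * \<delta>"
      unfolding A_def using y'(3) by (intro abs_sum_mult_le) fastforce
    ultimately show ?thesis
      using True \<open>A * \<delta> < \<epsilon>\<close> by simp
  next
    case False
    then have "\<bar>x i - y i\<bar> < \<delta>"
      using y'(3) that by (simp add: y_def I'_def)
    with \<open>\<delta> \<le> \<epsilon>\<close> show ?thesis
      by simp
  qed
  ultimately show ?thesis
    using a_y by blast
qed

lemma rational_solution_near:
  fixes x :: "'i \<Rightarrow> real"
  assumes "finite I" "\<forall>c \<in> Eq. \<forall>i \<in> I. c i \<in> \<rat>" "\<forall>c \<in> Eq. (\<Sum>i\<in>I. c i * x i) = 0" "\<epsilon> > 0"
  shows "\<exists>y. (\<forall>i \<in> I. y i \<in> \<rat>) \<and> (\<forall>c \<in> Eq. (\<Sum>i\<in>I. c i * y i) = 0) \<and> (\<forall>i \<in> I. \<bar>x i - y i\<bar> < \<epsilon>)"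
  using assms
proof (induction "card I" arbitrary: I Eq \<epsilon> rule: less_induct)
  case less
  show ?case
  proof (cases "\<exists>c \<in> Eq. \<exists>k \<in> I. c k \<noteq> 0")
    case False
    obtain y where "\<forall>i. y i \<in> \<rat> \<and> \<bar>x i - y i\<bar> < \<epsilon>"
      using Rats_approx_uniform[OF less.prems(4), of x] by blast
    moreover have "(\<Sum>i\<in>I. c i * y i) = 0" if "c \<in> Eq" for c
    proof -
      have "\<forall>i \<in> I. c i = 0"
        using False that by blast
      then show ?thesis
        by simp
    qed
    ultimately show ?thesis
      by (intro exI[of _ y]) simp
  next
    case True
    then obtain c k where "c \<in> Eq" "k \<in> I" "c k \<noteq> 0"
      by blast
    define a where "a i = c i / c k" for i
    define reduce where "reduce d i = d i - d k * a i" for d :: "'i \<Rightarrow> real" and i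
    have "a k = 1"
      using \<open>c k \<noteq> 0\<close> by (simp add: a_def)
    have a_rat: "\<forall>i \<in> I. a i \<in> \<rat>"
      using less.prems(2) \<open>c \<in> Eq\<close> \<open>k \<in> I\<close> by (simp add: a_def)
    have a_x: "(\<Sum>i\<in>I. a i * x i) = 0"
      using less.prems(3) \<open>c \<in> Eq\<close> by (simp add: a_def sum_divide_distrib[symmetric])
    have "\<exists>y. (\<forall>i \<in> I - {k}. y i \<in> \<rat>) \<and> (\<forall>d \<in> reduce ` Eq. (\<Sum>i\<in>I - {k}. d i * y i) = 0)
        \<and> (\<forall>i \<in> I - {k}. \<bar>x i - y i\<bar> < \<delta>)" if "\<delta> > 0" for \<delta>
    proof (rule less.hyps)
      show "card (I - {k}) < card I"
        using less.prems(1) \<open>k \<in> I\<close> by (rule card_Diff1_less)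
      show "\<forall>d \<in> reduce ` Eq. \<forall>i \<in> I - {k}. d i \<in> \<rat>"
        using less.prems(2) a_rat \<open>k \<in> I\<close> by (auto simp: reduce_def)
      show "\<forall>d \<in> reduce ` Eq. (\<Sum>i\<in>I - {k}. d i * x i) = 0"
        using sum_eliminate_coordinate[where I = I and k = k and a = a and z = x,
            OF less.prems(1) \<open>k \<in> I\<close> \<open>a k = 1\<close>]
          less.prems(3) a_x by (auto simp: reduce_def)
    qed (use less.prems(1) that in simp_all)
    then have "\<exists>y. (\<forall>i \<in> I. y i \<in> \<rat>) \<and> (\<forall>d \<in> Eq \<union> {a}. (\<Sum>i\<in>I. d i * y i) = 0)
        \<and> (\<forall>i \<in> I. \<bar>x i - y i\<bar> < \<epsilon>)"
      using rational_solution_extend[OF less.prems(1) \<open>k \<in> I\<close> \<open>a k = 1\<close> a_rat a_x less.prems(4)]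
      by (simp add: reduce_def)
    then show ?thesis
      by blast
  qed
qed

lemma Rats_common_denominator:
  assumes "finite I" "\<forall>i \<in> I. y i \<in> \<rat>"
  shows "\<exists>D::nat. D > 0 \<and> (\<forall>i \<in> I. real D * y i \<in> \<int>)"
  using assms
proof (induction I rule: finite_induct)
  case empty
  show ?case
    by (intro exI[of _ 1]) simp
next
  case (insert j I)
  then obtain D where D: "D > 0" "\<forall>i \<in> I. real D * y i \<in> \<int>"
    by auto
  obtain p q where pq: "q > 0" "y j = of_int p / of_int q"
    using insert.prems by (auto elim: Rats_cases')
  have "real (D * nat q) * y j = of_int (int D * p)"
    using pq by simp
  moreover have "real (D * nat q) * y i \<in> \<int>" if "i \<in> I" for i
  proof -
    have "real (D * nat q) * y i = (real D * y i) * of_int q"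
      using pq by simp
    then show ?thesis
      using D(2) that by (metis Ints_mult Ints_of_int)
  qed
  ultimately show ?case
    using D pq by (intro exI[of _ "D * nat q"]) auto
qed

text \<open>The extra equations \<open>indicator {j}\<close> keep the zeros of \<open>x\<close>, and approximating to within
  the least positive entry of \<open>x\<close> keeps its positive entries positive.\<close>

lemma rational_solution_same_support:
  fixes x :: "'i \<Rightarrow> real"
  assumes "finite I" "\<forall>c \<in> Eq. \<forall>i \<in> I. c i \<in> \<rat>" "\<forall>c \<in> Eq. (\<Sum>i\<in>I. c i * x i) = 0"
    and "\<forall>i \<in> I. x i \<ge> 0"
  shows "\<exists>y. (\<forall>c \<in> Eq. (\<Sum>i\<in>I. c i * y i) = 0)
    \<and> (\<forall>i \<in> I. y i \<in> \<rat> \<and> y i \<ge> 0 \<and> (y i > 0 \<longleftrightarrow> x i > 0))"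
proof -
  define Z where "Z = (\<lambda>j. indicator {j} :: 'i \<Rightarrow> real) ` {j \<in> I. x j = 0}"
  define \<epsilon> where "\<epsilon> = Min (insert 1 (x ` {i \<in> I. x i > 0}))"
  have unit_eval: "(\<Sum>i\<in>I. indicator {j} i * z i) = z j" if "j \<in> I" for j and z :: "'i \<Rightarrow> real"
    unfolding indicator_times_eq_if using assms(1) that by simp
  have "\<epsilon> > 0" and \<epsilon>_le: "\<And>i. i \<in> I \<Longrightarrow> x i > 0 \<Longrightarrow> \<epsilon> \<le> x i"
    using assms(1) by (auto simp: \<epsilon>_def)
  moreover have "\<forall>c \<in> Eq \<union> Z. \<forall>i \<in> I. c i \<in> \<rat>"
    using assms(2) by (auto simp: Z_def indicator_def)
  moreover have "\<forall>c \<in> Eq \<union> Z. (\<Sum>i\<in>I. c i * x i) = 0"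
    using assms(3) by (auto simp: Z_def unit_eval)
  ultimately obtain y where y: "\<forall>i \<in> I. y i \<in> \<rat>" "\<forall>c \<in> Eq \<union> Z. (\<Sum>i\<in>I. c i * y i) = 0"
    "\<forall>i \<in> I. \<bar>x i - y i\<bar> < \<epsilon>"
    using rational_solution_near[OF assms(1)] by blast
  have "y i = 0" if "i \<in> I" "x i = 0" for i
    using y(2) unit_eval[OF that(1), of y] that by (auto simp: Z_def)
  moreover have "y i > 0" if "i \<in> I" "x i > 0" for i
    using y(3) \<epsilon>_le[OF that] that(1) by (fastforce simp: abs_less_iff)
  ultimately show ?thesis
    using y(1,2) assms(4) by (metis UnI1 less_eq_real_def)
qed

lemma nat_solution_same_support:
  fixes x :: "'i \<Rightarrow> real"
  assumes "finite I" "\<forall>c \<in> Eq. \<forall>i \<in> I. c i \<in> \<rat>" "\<forall>c \<in> Eq. (\<Sum>i\<in>I. c i * x i) = 0"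
    and "\<forall>i \<in> I. x i \<ge> 0"
  shows "\<exists>N :: 'i \<Rightarrow> nat. (\<forall>c \<in> Eq. (\<Sum>i\<in>I. c i * real (N i)) = 0) \<and> (\<forall>i \<in> I. N i > 0 \<longleftrightarrow> x i > 0)"
proof -
  obtain y where y: "\<forall>c \<in> Eq. (\<Sum>i\<in>I. c i * y i) = 0"
    "\<forall>i \<in> I. y i \<in> \<rat> \<and> y i \<ge> 0 \<and> (y i > 0 \<longleftrightarrow> x i > 0)"
    using rational_solution_same_support[OF assms] by blast
  obtain D :: nat where D: "D > 0" "\<forall>i \<in> I. real D * y i \<in> \<int>"
    using Rats_common_denominator[OF assms(1)] y(2) by blast
  define N where "N i = nat \<lfloor>real D * y i\<rfloor>" for i
  have N: "real (N i) = real D * y i" if "i \<in> I" for i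
    using D(2) y(2) that by (auto simp: N_def elim!: Ints_cases)
  have "(\<Sum>i\<in>I. c i * real (N i)) = real D * (\<Sum>i\<in>I. c i * y i)" for c
    by (simp add: N sum_distrib_left algebra_simps cong: sum.cong)
  moreover have "N i > 0 \<longleftrightarrow> x i > 0" if "i \<in> I" for i
  proof -
    have "N i > 0 \<longleftrightarrow> real D * y i > 0"
      using N[OF that] by (metis of_nat_0_less_iff)
    then show ?thesis
      using y(2) that D(1) by (simp add: zero_less_mult_iff)
  qed
  ultimately show ?thesis
    using y(1) by (intro exI[of _ N]) simp
qed

lemma sum_UNIV_Plus:
  "(\<Sum>i\<in>UNIV. f i) = (\<Sum>a\<in>UNIV. f (Inl a)) + (\<Sum>b\<in>UNIV. f (Inr b :: 'a::finite + 'b::finite))"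
  by (simp add: sum.Plus flip: UNIV_Plus_UNIV)

text \<open>The unknowns are indexed by \<open>'v + 'b \<times> 'v \<times> 'v\<close>: \<open>Inl v\<close> stands for \<open>n v\<close> and
  \<open>Inr (b, v, w)\<close> for \<open>m b v w\<close>.\<close>

lemma balanced_nat_weights_same_support:
  fixes p :: "'v::finite \<Rightarrow> real" and q :: "'b::finite \<Rightarrow> 'v \<Rightarrow> 'v \<Rightarrow> real"
  assumes "balanced p q" "\<And>v. p v \<ge> 0" "\<And>b v w. q b v w \<ge> 0"
  shows "\<exists>(n :: 'v \<Rightarrow> nat) m. balanced n m \<and> (\<forall>v. n v > 0 \<longleftrightarrow> p v > 0)
    \<and> (\<forall>b v w. m b v w > 0 \<longleftrightarrow> q b v w > 0)"
proof -
  define row :: "'b \<Rightarrow> 'v \<Rightarrow> 'v + 'b \<times> 'v \<times> 'v \<Rightarrow> real"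
    where "row b v = case_sum (\<lambda>u. - indicator {v} u) (indicator (range (\<lambda>w. (b, v, w))))" for b v
  define col :: "'b \<Rightarrow> 'v \<Rightarrow> 'v + 'b \<times> 'v \<times> 'v \<Rightarrow> real"
    where "col b w = case_sum (\<lambda>u. - indicator {w} u) (indicator (range (\<lambda>v. (b, v, w))))" for b w
  have row_eval: "(\<Sum>i\<in>UNIV. row b v i * y i) = (\<Sum>w\<in>UNIV. y (Inr (b, v, w))) - y (Inl v)" for b v y
    by (simp add: row_def sum_UNIV_Plus sum_negf sum.reindex inj_on_def)
  have col_eval: "(\<Sum>i\<in>UNIV. col b w i * y i) = (\<Sum>v\<in>UNIV. y (Inr (b, v, w))) - y (Inl w)" for b w y
    by (simp add: col_def sum_UNIV_Plus sum_negf sum.reindex inj_on_def)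
  define Eq where "Eq = {row b v | b v. True} \<union> {col b w | b w. True}"
  define z where "z = case_sum p (\<lambda>(b, v, w). q b v w)"
  have "\<forall>c \<in> Eq. \<forall>i \<in> UNIV. c i \<in> \<rat>"
    by (auto simp: Eq_def row_def col_def indicator_def split: sum.split)
  moreover have "\<forall>c \<in> Eq. (\<Sum>i\<in>UNIV. c i * z i) = 0"
    using \<open>balanced p q\<close> by (auto simp: Eq_def row_eval col_eval z_def balanced_def)
  moreover have "\<forall>i \<in> UNIV. z i \<ge> 0"
    using assms(2,3) by (auto simp: z_def split: sum.split)
  ultimately obtain N :: "'v + 'b \<times> 'v \<times> 'v \<Rightarrow> nat"
    where N: "\<forall>c \<in> Eq. (\<Sum>i\<in>UNIV. c i * real (N i)) = 0" "\<forall>i. N i > 0 \<longleftrightarrow> z i > 0"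
    using nat_solution_same_support[of UNIV Eq z] by auto
  define n where "n v = N (Inl v)" for v
  define m where "m b v w = N (Inr (b, v, w))" for b v w
  have "row b v \<in> Eq" "col b v \<in> Eq" for b v
    unfolding Eq_def by blast+
  then have "real (\<Sum>w\<in>UNIV. m b v w) = real (n v)" "real (\<Sum>v\<in>UNIV. m b v w) = real (n w)" for b v w
    using N(1) row_eval[of b v "\<lambda>i. real (N i)"] col_eval[of b w "\<lambda>i. real (N i)"]
    by (simp_all add: m_def n_def)
  then have "balanced n m"
    unfolding balanced_def of_nat_eq_iff by blast
  moreover have "n v > 0 \<longleftrightarrow> p v > 0" "m b v w > 0 \<longleftrightarrow> q b v w > 0" for b v w
    using N(2) by (simp_all add: n_def m_def z_def)
  ultimately show ?thesis
    by (intro exI[of _ n] exI[of _ m]) simp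
qed

section \<open>The weights of a shift-invariant measure\<close>

lemma space_full_shift_measure [simp]: "space full_shift_measure = UNIV"
  by (simp add: full_shift_measure_def space_PiM PiE_UNIV_domain)

lemma full_shift_cylinder_in_sets: "{x. x f = v} \<in> sets full_shift_measure"
proof -
  have "(\<lambda>x. x f) \<in> measurable full_shift_measure (count_space UNIV)"
    unfolding full_shift_measure_def by (rule measurable_component_singleton) simp
  then have "(\<lambda>x. x f) -` {v} \<inter> space full_shift_measure \<in> sets full_shift_measure"
    by (rule measurable_sets) simp
  then show ?thesis
    by (simp add: vimage_def)
qed

lemma (in finite_measure) measure_fibers_sum:
  fixes \<phi> :: "'a \<Rightarrow> 'c::finite"
  assumes "\<And>a. {x \<in> A. \<phi> x = a} \<in> sets M"
  shows "(\<Sum>a\<in>UNIV. measure M {x \<in> A. \<phi> x = a}) = measure M A"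
proof -
  have "(\<Sum>a\<in>UNIV. measure M {x \<in> A. \<phi> x = a}) = measure M (\<Union>a. {x \<in> A. \<phi> x = a})"
    using assms by (intro finite_measure_finite_Union[symmetric]) (auto simp: disjoint_family_on_def)
  also have "(\<Union>a. {x \<in> A. \<phi> x = a}) = A"
    by auto
  finally show ?thesis .
qed

locale shift_invariant_measure = prob_space M
  for M :: "('b::finite fgrp \<Rightarrow> 'v::finite) measure" and E :: "('v \<times> 'v \<times> ('b \<times> bool)) set" +
  assumes sets_eq: "sets M = sets (restrict_space full_shift_measure (graph_subshift E))"
    and shift_invariant: "\<forall>g. \<forall>A \<in> sets M. measure M (shift g ` A) = measure M A"
begin

lemma space_eq: "space M = graph_subshift E"
  using sets_eq_imp_space_eq[OF sets_eq] by (simp add: space_restrict_space)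

lemma cylinder_in_sets: "{x \<in> graph_subshift E. x f = v} \<in> sets M"
proof -
  have "graph_subshift E \<inter> {x. x f = v} \<in> sets (restrict_space full_shift_measure (graph_subshift E))"
    unfolding sets_restrict_space using full_shift_cylinder_in_sets by (rule imageI)
  moreover have "{x \<in> graph_subshift E. x f = v} = graph_subshift E \<inter> {x. x f = v}"
    by blast
  ultimately show ?thesis
    by (simp add: sets_eq)
qed

lemma measure_cylinder_shift:
  "measure M {x \<in> graph_subshift E. x f = v} = measure M {x \<in> graph_subshift E. x fone = v}"
proof -
  have "{x \<in> graph_subshift E. x fone = v} = shift (finv f) ` {x \<in> graph_subshift E. x f = v}"
    by (simp add: shift_image_cylinder)
  then show ?thesis
    using shift_invariant cylinder_in_sets by simp
qed

lemma pair_cylinder_in_sets: "{x \<in> graph_subshift E. x f = v \<and> x g = w} \<in> sets M"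
proof -
  have "{x \<in> graph_subshift E. x f = v \<and> x g = w}
      = {x \<in> graph_subshift E. x f = v} \<inter> {x \<in> graph_subshift E. x g = w}"
    by blast
  then show ?thesis
    using sets.Int[OF cylinder_in_sets cylinder_in_sets] by (simp only:)
qed

definition vertex_weight :: "'v \<Rightarrow> real" where
  "vertex_weight v = measure M {x \<in> graph_subshift E. x fone = v}"

definition edge_weight :: "'b \<Rightarrow> 'v \<Rightarrow> 'v \<Rightarrow> real" where
  "edge_weight b v w = measure M {x \<in> graph_subshift E. x fone = v \<and> x (gen (b, True)) = w}"

lemma balanced_weights: "balanced vertex_weight edge_weight"
proof -
  have nested_row: "{x \<in> {x \<in> graph_subshift E. x fone = v}. x g = w}
      = {x \<in> graph_subshift E. x fone = v \<and> x g = w}"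
    and nested_col: "{x \<in> {x \<in> graph_subshift E. x g = w}. x fone = v}
      = {x \<in> graph_subshift E. x fone = v \<and> x g = w}"
    for g v w
    by blast+
  have "(\<Sum>w\<in>UNIV. measure M {x \<in> {x \<in> graph_subshift E. x fone = v}. x g = w})
      = measure M {x \<in> graph_subshift E. x fone = v}" for g v
    by (rule measure_fibers_sum) (unfold nested_row, rule pair_cylinder_in_sets)
  then have "(\<Sum>w\<in>UNIV. measure M {x \<in> graph_subshift E. x fone = v \<and> x g = w})
      = measure M {x \<in> graph_subshift E. x fone = v}" for g v
    by (simp only: nested_row)
  moreover have "(\<Sum>v\<in>UNIV. measure M {x \<in> {x \<in> graph_subshift E. x g = w}. x fone = v})
      = measure M {x \<in> graph_subshift E. x g = w}" for g w
    by (rule measure_fibers_sum) (unfold nested_col, rule pair_cylinder_in_sets)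
  then have "(\<Sum>v\<in>UNIV. measure M {x \<in> graph_subshift E. x fone = v \<and> x g = w})
      = measure M {x \<in> graph_subshift E. x fone = w}" for g w
    by (simp only: nested_col measure_cylinder_shift[of g w])
  ultimately show ?thesis
    unfolding balanced_def vertex_weight_def edge_weight_def by blast
qed

lemma edge_weight_pos_imp_edges:
  assumes "edge_weight b v w > 0"
  shows "(v, w, (b, True)) \<in> E \<and> (w, v, (b, False)) \<in> E"
proof -
  have "{x \<in> graph_subshift E. x fone = v \<and> x (gen (b, True)) = w} \<noteq> {}"
  proof
    assume empty: "{x \<in> graph_subshift E. x fone = v \<and> x (gen (b, True)) = w} = {}"
    show False
      using assms unfolding edge_weight_def empty by simp
  qed
  then obtain x where "x \<in> graph_subshift E" "x fone = v" "x (gen (b, True)) = w"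
    by blast
  then show ?thesis
    using graph_subshift_edges_at_fone[of x E "(b, True)"] by (simp add: letter_inv_def)
qed

lemma sum_vertex_weight: "(\<Sum>v\<in>UNIV. vertex_weight v) = 1"
proof -
  have "(\<Sum>v\<in>UNIV. vertex_weight v) = measure M (graph_subshift E)"
    unfolding vertex_weight_def by (rule measure_fibers_sum) (rule cylinder_in_sets)
  also have "\<dots> = 1"
    using prob_space by (simp only: space_eq)
  finally show ?thesis .
qed

lemma ex_vertex_weight_pos: "\<exists>v. vertex_weight v > 0"
proof (rule ccontr)
  assume "\<nexists>v. vertex_weight v > 0"
  then have "(\<Sum>v\<in>UNIV. vertex_weight v) \<le> 0"
    by (intro sum_nonpos) (simp add: not_less)
  then show False
    using sum_vertex_weight by simp
qed

lemma periodic_point_if_vertex_weight_pos: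
  assumes "vertex_weight v > 0"
  shows "\<exists>x \<in> graph_subshift E. periodic x \<and> x fone = v"
proof -
  have "vertex_weight u \<ge> 0" "edge_weight b u w \<ge> 0" for b u w
    by (simp_all add: vertex_weight_def edge_weight_def)
  then obtain n :: "'v \<Rightarrow> nat" and m where nm: "balanced n m" "\<forall>u. n u > 0 \<longleftrightarrow> vertex_weight u > 0"
    "\<forall>b u w. m b u w > 0 \<longleftrightarrow> edge_weight b u w > 0"
    using balanced_nat_weights_same_support[OF balanced_weights] by blast
  show ?thesis
  proof (rule periodic_point_from_balanced_weights[OF nm(1)])
    show "n v > 0"
      using nm(2) assms by blast
    show "(u, w, (b, True)) \<in> E \<and> (w, u, (b, False)) \<in> E" if "m b u w > 0" for b u w
      using nm(3) that by (intro edge_weight_pos_imp_edges) blast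
  qed
qed

end

theorem theorem5:
  fixes E :: "('v::finite \<times> 'v \<times> ('b::finite \<times> bool)) set"
    and M :: "('b fgrp \<Rightarrow> 'v) measure"
  assumes "prob_space M"
    and "sets M = sets (restrict_space full_shift_measure (graph_subshift E))"
    and "\<forall>g. \<forall>A \<in> sets M. measure M (shift g ` A) = measure M A"
  shows "(\<exists>x \<in> graph_subshift E. periodic x)
    \<and> (\<forall>v. measure M {x \<in> graph_subshift E. x fone = v} > 0
           \<longrightarrow> (\<exists>x \<in> graph_subshift E. periodic x \<and> x fone = v))"
proof -
  interpret shift_invariant_measure M E
    using assms by (simp add: shift_invariant_measure_def shift_invariant_measure_axioms_def)
  have "\<exists>x \<in> graph_subshift E. periodic x"
    using ex_vertex_weight_pos periodic_point_if_vertex_weight_pos by blast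
  moreover have "\<forall>v. vertex_weight v > 0 \<longrightarrow> (\<exists>x \<in> graph_subshift E. periodic x \<and> x fone = v)"
    using periodic_point_if_vertex_weight_pos by blast
  ultimately show ?thesis
    unfolding vertex_weight_def by blast
qed

end
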